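(* Let $(\mathbb X,d,\delta)$ be a nondegenerate dilation structure and let $x\in\mathbb X$. Then the function $d^x$ is a quasimetric on $B^d(x,R)$ with the same constants $c_{\mathbb X}$ and $Q_{\mathbb X}$ (in the generalized symmetry property and the generalized triangle inequality) as the quasimetric $d$.
   Context: A quasimetric space $(\mathbb X,d)$ is a topological space $\mathbb X$ with a map $d:\mathbb X\times\mathbb X\to[0,\infty)$ such that: (i) $d(u,v)=0$ iff $u=v$; (ii) $d(u,v)\le c_{\mathbb X}\,d(v,u)$ for a constant $1\le c_{\mathbb X}<\infty$ (generalized symmetry); (iii) $d(u,v)\le Q_{\mathbb X}(d(u,w)+d(w,v))$ for a constant $1\le Q_{\mathbb X}<\infty$ (generalized triangle inequality); (iv) $d(u,v)$ is upper semicontinuous in the first argument. The topology of $\mathbb X$ is assumed to coincide with the topology induced by $d$. Write $B^d(x,r)=\{y: d(y,x)<r\}$ and $\bar B^d(x,r)$ for its closure; $\mathbb X$ is boundedly compact if closed bounded sets are compact. A dilation structure $(\mathbb X,d,\delta)$ is a complete boundedly compact quasimetric space $(\mathbb X,d)$ with $d$ continuous in both arguments, satisfying: (A0) For every $x\in\mathbb X$ and $\varepsilon\in(0,1]$ there are a neighborhood $U(x)$ of $x$ and homeomorphisms (dilations) $\delta^x_\varepsilon:U(x)\to V_\varepsilon(x)$ and $\delta^x_{\varepsilon^{-1}}:W_{\varepsilon^{-1}}(x)\to U(x)$ with $V_\varepsilon(x)\subseteq W_{\varepsilon^{-1}}(x)\subseteq U(x)$; the family $\{\delta^x_\varepsilon\}_{\varepsilon\in(0,1]}$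 is continuous in $\varepsilon$; there is $R>0$ with $\bar B^d(x,R)\subseteq U(x)$ for all $x$, and for all $\varepsilon<1$ and $\tilde r>0$ with $\bar B^d(x,\tilde r)\subseteq U(x)$ one has $B^d(x,\tilde r\varepsilon)\subseteq\delta^x_\varepsilon B^d(x,\tilde r)\subset B^d(x,\tilde r)$. (A1) For all $x$ and $y\in U(x)$: $\delta^x_\varepsilon x=x$, $\delta^x_1=\mathrm{id}$, $\lim_{\varepsilon\to0}\delta^x_\varepsilon y=x$. (A2) $\delta^x_\varepsilon\delta^x_\mu u=\delta^x_{\varepsilon\mu}u$ for $u\in U(x)$ whenever both sides are defined. (A3) For every $x$, the limit $d^x(u,v)=\lim_{\varepsilon\to0}\frac1\varepsilon d(\delta^x_\varepsilon u,\delta^x_\varepsilon v)$ exists uniformly in $u,v\in\bar B^d(x,R)$. The dilation structure is nondegenerate if $d^x(u,v)=0$ implies $u=v$. *)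

theory Defs
  imports "HOL-Analysis.Analysis"
begin

definition qball :: "('a \<Rightarrow> 'a \<Rightarrow> real) \<Rightarrow> 'a \<Rightarrow> real \<Rightarrow> 'a set" where
  "qball d x r = {y. d y x < r}"

definition usc_on :: "'a::topological_space set \<Rightarrow> ('a \<Rightarrow> real) \<Rightarrow> bool" where
  "usc_on S f \<longleftrightarrow> (\<forall>y\<in>S. \<forall>e>0. eventually (\<lambda>z. f z < f y + e) (at y within S))"

definition quasimetric_on ::
  "'a::topological_space set \<Rightarrow> ('a \<Rightarrow> 'a \<Rightarrow> real) \<Rightarrow> real \<Rightarrow> real \<Rightarrow> bool" where
  "quasimetric_on S d c Q \<longleftrightarrow>
     1 \<le> c \<and> 1 \<le> Q \<and>
     (\<forall>u\<in>S. \<forall>v\<in>S. 0 \<le> d u v) \<and>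
     (\<forall>u\<in>S. \<forall>v\<in>S. d u v = 0 \<longleftrightarrow> u = v) \<and>
     (\<forall>u\<in>S. \<forall>v\<in>S. d u v \<le> c * d v u) \<and>
     (\<forall>u\<in>S. \<forall>v\<in>S. \<forall>w\<in>S. d u v \<le> Q * (d u w + d w v)) \<and>
     (\<forall>v\<in>S. usc_on S (\<lambda>u. d u v))"

definition quasimetric_space :: "('a::topological_space \<Rightarrow> 'a \<Rightarrow> real) \<Rightarrow> real \<Rightarrow> real \<Rightarrow> bool" where
  "quasimetric_space d c Q \<longleftrightarrow> quasimetric_on UNIV d c Q \<and>
     (\<forall>S. open S \<longleftrightarrow> (\<forall>y\<in>S. \<exists>r>0. qball d y r \<subseteq> S))"

definition q_cauchy :: "('a \<Rightarrow> 'a \<Rightarrow> real) \<Rightarrow> (nat \<Rightarrow> 'a) \<Rightarrow> bool" where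
  "q_cauchy d s \<longleftrightarrow> (\<forall>e>0. \<exists>N. \<forall>m\<ge>N. \<forall>n\<ge>N. d (s m) (s n) < e)"

definition q_complete :: "('a::topological_space \<Rightarrow> 'a \<Rightarrow> real) \<Rightarrow> bool" where
  "q_complete d \<longleftrightarrow> (\<forall>s. q_cauchy d s \<longrightarrow> (\<exists>y. s \<longlonglongrightarrow> y))"

definition q_bounded :: "('a \<Rightarrow> 'a \<Rightarrow> real) \<Rightarrow> 'a set \<Rightarrow> bool" where
  "q_bounded d S \<longleftrightarrow> (\<exists>x r. S \<subseteq> qball d x r)"

definition boundedly_compact :: "('a::topological_space \<Rightarrow> 'a \<Rightarrow> real) \<Rightarrow> bool" where
  "boundedly_compact d \<longleftrightarrow> (\<forall>S. closed S \<and> q_bounded d S \<longrightarrow> compact S)"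

text \<open>Domain of the dilation \<delta> x e: U x for e in (0,1], and W x (1/e) (the set
  W_{e}(x) of the paper, indexed here by 1/e) for e > 1.\<close>
definition dil_dom :: "('a \<Rightarrow> 'a set) \<Rightarrow> ('a \<Rightarrow> real \<Rightarrow> 'a set) \<Rightarrow> 'a \<Rightarrow> real \<Rightarrow> 'a set" where
  "dil_dom U W x e = (if 0 < e \<and> e \<le> 1 then U x else if 1 < e then W x (1 / e) else {})"

text \<open>Dilation structure (A0)-(A3).  U x is U(x); V x e is V_e(x); W x e is
  W_{1/e}(x) for e in (0,1]; \<delta> x e is the dilation \<delta>^x_e.\<close>
definition dilation_structure ::
  "('a::topological_space \<Rightarrow> 'a \<Rightarrow> real) \<Rightarrow> real \<Rightarrow> real \<Rightarrow> ('a \<Rightarrow> 'a set) \<Rightarrow>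
   ('a \<Rightarrow> real \<Rightarrow> 'a set) \<Rightarrow> ('a \<Rightarrow> real \<Rightarrow> 'a set) \<Rightarrow> ('a \<Rightarrow> real \<Rightarrow> 'a \<Rightarrow> 'a) \<Rightarrow> real \<Rightarrow> bool"
  where
  "dilation_structure d c Q U V W \<delta> R \<longleftrightarrow>
     quasimetric_space d c Q \<and> q_complete d \<and> boundedly_compact d \<and>
     continuous_on UNIV (\<lambda>p. d (fst p) (snd p)) \<and>
     \<comment> \<open>(A0)\<close>
     0 < R \<and>
     (\<forall>x. x \<in> interior (U x) \<and>
        (\<forall>e. 0 < e \<and> e \<le> 1 \<longrightarrow>
           (\<exists>g. homeomorphism (U x) (V x e) (\<delta> x e) g) \<and>
           (\<exists>g. homeomorphism (W x e) (U x) (\<delta> x (1 / e)) g) \<and>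
           V x e \<subseteq> W x e \<and> W x e \<subseteq> U x) \<and>
        (\<forall>y\<in>U x. continuous_on {0<..1} (\<lambda>e. \<delta> x e y)) \<and>
        closure (qball d x R) \<subseteq> U x \<and>
        (\<forall>e r. 0 < e \<and> e < 1 \<and> 0 < r \<and> closure (qball d x r) \<subseteq> U x \<longrightarrow>
           qball d x (r * e) \<subseteq> \<delta> x e ` qball d x r \<and>
           \<delta> x e ` qball d x r \<subseteq> qball d x r)) \<and>
     \<comment> \<open>(A1)\<close>
     (\<forall>x. (\<forall>e. 0 < e \<and> e \<le> 1 \<longrightarrow> \<delta> x e x = x) \<and>
          (\<forall>y\<in>U x. \<delta> x 1 y = y \<and> ((\<lambda>e. \<delta> x e y) \<longlongrightarrow> x) (at_right 0))) \<and>
     \<comment> \<open>(A2)\<close>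
     (\<forall>x e m u. u \<in> dil_dom U W x m \<and> \<delta> x m u \<in> dil_dom U W x e \<and>
          u \<in> dil_dom U W x (e * m) \<longrightarrow> \<delta> x e (\<delta> x m u) = \<delta> x (e * m) u) \<and>
     \<comment> \<open>(A3)\<close>
     (\<forall>x. \<exists>l. uniform_limit (closure (qball d x R) \<times> closure (qball d x R))
           (\<lambda>e p. d (\<delta> x e (fst p)) (\<delta> x e (snd p)) / e) l (at_right 0))"

definition dlim :: "('a \<Rightarrow> 'a \<Rightarrow> real) \<Rightarrow> ('a \<Rightarrow> real \<Rightarrow> 'a \<Rightarrow> 'a) \<Rightarrow> 'a \<Rightarrow> 'a \<Rightarrow> 'a \<Rightarrow> real" where
  "dlim d \<delta> x u v = Lim (at_right 0) (\<lambda>e. d (\<delta> x e u) (\<delta> x e v) / e)"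

definition nondegenerate ::
  "('a::topological_space \<Rightarrow> 'a \<Rightarrow> real) \<Rightarrow> ('a \<Rightarrow> real \<Rightarrow> 'a \<Rightarrow> 'a) \<Rightarrow> real \<Rightarrow> bool" where
  "nondegenerate d \<delta> R \<longleftrightarrow>
     (\<forall>x. \<forall>u\<in>closure (qball d x R). \<forall>v\<in>closure (qball d x R). dlim d \<delta> x u v = 0 \<longrightarrow> u = v)"

end

theory Submission
  imports Defs
begin

text \<open>Each rescaled pull-back \<open>d (\<delta>\<^sup>x\<^sub>\<epsilon> u) (\<delta>\<^sup>x\<^sub>\<epsilon> v) / \<epsilon>\<close> satisfies the inequalities of a
  quasimetric with the constants of \<open>d\<close>, and weak inequalities survive the limit \<open>\<epsilon> \<rightarrow> 0\<close>.
  Nondegeneracy is exactly what keeps \<open>d\<^sup>x(u, v) = 0 \<Longrightarrow> u = v\<close> from being lost in the limit.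
  Upper semicontinuity comes for free: by (A3) \<open>d\<^sup>x\<close> is a uniform limit of continuous
  functions, hence continuous.\<close>

lemma continuous_on_imp_usc_on:
  assumes "continuous_on S f"
  shows "usc_on S f"
  unfolding usc_on_def
proof (intro ballI allI impI)
  fix y e assume "y \<in> S" and "0 < (e::real)"
  with assms have "(f \<longlongrightarrow> f y) (at y within S)"
    by (simp add: continuous_on_def)
  from order_tendstoD(2)[OF this] \<open>0 < e\<close>
  show "\<forall>\<^sub>F z in at y within S. f z < f y + e" by simp
qed

lemma continuous_on_rescaled_distance:
  fixes d :: "'a::topological_space \<Rightarrow> 'a \<Rightarrow> real"
  assumes d: "continuous_on UNIV (\<lambda>p. d (fst p) (snd p))"
    and g: "continuous_on A g"
  shows "continuous_on (A \<times> A) (\<lambda>p. d (g (fst p)) (g (snd p)) / e)"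
proof -
  have "continuous_on (A \<times> A) (\<lambda>p. (g (fst p), g (snd p)))"
    by (intro continuous_on_Pair continuous_on_compose2[OF g] continuous_intros) auto
  then have "continuous_on (A \<times> A) (\<lambda>p. d (g (fst p)) (g (snd p)))"
    using continuous_on_compose2[OF d] by fastforce
  from continuous_on_mult_right[OF this, of "inverse e"] show ?thesis
    by (simp add: divide_inverse)
qed

lemma tendsto_rescaled_distance_quasimetric_inequalities:
  fixes d :: "'a::topological_space \<Rightarrow> 'a \<Rightarrow> real" and l :: "'a \<Rightarrow> 'a \<Rightarrow> real"
  assumes d: "quasimetric_on UNIV d c Q"
    and lim: "\<And>u v. u \<in> S \<Longrightarrow> v \<in> S \<Longrightarrow>
      ((\<lambda>e. d (g e u) (g e v) / e) \<longlongrightarrow> l u v) (at_right 0)"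
  shows "\<forall>u\<in>S. l u u = 0"
    and "\<forall>u\<in>S. \<forall>v\<in>S. 0 \<le> l u v"
    and "\<forall>u\<in>S. \<forall>v\<in>S. l u v \<le> c * l v u"
    and "\<forall>u\<in>S. \<forall>v\<in>S. \<forall>w\<in>S. l u v \<le> Q * (l u w + l w v)"
proof -
  have pos: "\<forall>\<^sub>F e in at_right 0. 0 < (e::real)"
    by (simp add: eventually_at_right_less)
  have diag: "\<And>u. d u u = 0" and nonneg: "\<And>u v. 0 \<le> d u v"
    and sym: "\<And>u v. d u v \<le> c * d v u"
    and tri: "\<And>u v w. d u v \<le> Q * (d u w + d w v)"
    using d unfolding quasimetric_on_def by auto
  show "\<forall>u\<in>S. l u u = 0"
  proof
    fix u assume "u \<in> S"
    have "((\<lambda>e. d (g e u) (g e u) / e) \<longlongrightarrow> 0) (at_right 0)"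
      by (simp add: diag)
    with lim[OF \<open>u \<in> S\<close> \<open>u \<in> S\<close>] show "l u u = 0"
      by (rule tendsto_unique[OF trivial_limit_at_right_real])
  qed
  show "\<forall>u\<in>S. \<forall>v\<in>S. 0 \<le> l u v"
    by (intro ballI tendsto_lowerbound[OF lim] eventually_mono[OF pos]) (simp_all add: nonneg)
  show "\<forall>u\<in>S. \<forall>v\<in>S. l u v \<le> c * l v u"
  proof (intro ballI tendsto_le[OF _ tendsto_mult_left lim] eventually_mono[OF pos])
    fix u v and e :: real assume "0 < e"
    then show "d (g e u) (g e v) / e \<le> c * (d (g e v) (g e u) / e)"
      using sym by (simp add: divide_right_mono)
  qed (auto intro: lim)
  show "\<forall>u\<in>S. \<forall>v\<in>S. \<forall>w\<in>S. l u v \<le> Q * (l u w + l w v)"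
  proof (intro ballI tendsto_le[OF _ tendsto_mult_left[OF tendsto_add[OF lim lim]] lim]
      eventually_mono[OF pos])
    fix u v w and e :: real assume "0 < e"
    then show "d (g e u) (g e v) / e \<le> Q * (d (g e u) (g e w) / e + d (g e w) (g e v) / e)"
      using tri by (simp add: divide_right_mono add_divide_distrib[symmetric])
  qed auto
qed

lemma dilation_structureD:
  assumes "dilation_structure d c Q U V W \<delta> R"
  shows "quasimetric_on UNIV d c Q"
    and "continuous_on UNIV (\<lambda>p. d (fst p) (snd p))"
    and "closure (qball d x R) \<subseteq> U x"
    and "0 < e \<Longrightarrow> e \<le> 1 \<Longrightarrow> continuous_on (U x) (\<delta> x e)"
    and "\<exists>l. uniform_limit (closure (qball d x R) \<times> closure (qball d x R))
           (\<lambda>e p. d (\<delta> x e (fst p)) (\<delta> x e (snd p)) / e) l (at_right 0)"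
  using assms unfolding dilation_structure_def quasimetric_space_def homeomorphism_def
  by (elim conjE; blast)+

lemma dilation_structure_uniform_limit_dlim:
  assumes "dilation_structure d c Q U V W \<delta> R"
  shows "uniform_limit (closure (qball d x R) \<times> closure (qball d x R))
      (\<lambda>e p. d (\<delta> x e (fst p)) (\<delta> x e (snd p)) / e) (\<lambda>p. dlim d \<delta> x (fst p) (snd p))
      (at_right 0)"
proof -
  obtain l where l: "uniform_limit (closure (qball d x R) \<times> closure (qball d x R))
      (\<lambda>e p. d (\<delta> x e (fst p)) (\<delta> x e (snd p)) / e) l (at_right 0)"
    using dilation_structureD(5)[OF assms] by blast
  have "l p = dlim d \<delta> x (fst p) (snd p)"
    if "p \<in> closure (qball d x R) \<times> closure (qball d x R)" for p
    using tendsto_Lim[OF _ tendsto_uniform_limitI[OF l that]] by (simp add: dlim_def)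
  with l show ?thesis
    by (subst uniform_limit_cong'[where g = "\<lambda>e p. d (\<delta> x e (fst p)) (\<delta> x e (snd p)) / e"
          and i = l]) auto
qed

lemma dilation_structure_continuous_on_dlim:
  assumes ds: "dilation_structure d c Q U V W \<delta> R"
  shows "continuous_on (closure (qball d x R) \<times> closure (qball d x R))
    (\<lambda>p. dlim d \<delta> x (fst p) (snd p))"
proof (rule uniform_limit_theorem[OF _ dilation_structure_uniform_limit_dlim[OF ds]])
  have "continuous_on (closure (qball d x R) \<times> closure (qball d x R))
      (\<lambda>p. d (\<delta> x e (fst p)) (\<delta> x e (snd p)) / e)" if "0 < e" "e \<le> 1" for e
    using continuous_on_rescaled_distance[OF dilation_structureD(2)[OF ds]
        continuous_on_subset[OF dilation_structureD(4)[OF ds that] dilation_structureD(3)[OF ds]]] .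
  then show "\<forall>\<^sub>F e in at_right 0. continuous_on (closure (qball d x R) \<times> closure (qball d x R))
      (\<lambda>p. d (\<delta> x e (fst p)) (\<delta> x e (snd p)) / e)"
    unfolding eventually_at_right_field by (intro exI[of _ 1]) auto
qed simp

lemma dilation_structure_tendsto_dlim:
  assumes "dilation_structure d c Q U V W \<delta> R"
    and "u \<in> closure (qball d x R)" "v \<in> closure (qball d x R)"
  shows "((\<lambda>e. d (\<delta> x e u) (\<delta> x e v) / e) \<longlongrightarrow> dlim d \<delta> x u v) (at_right 0)"
  using tendsto_uniform_limitI[OF dilation_structure_uniform_limit_dlim[OF assms(1)], of "(u, v)"]
    assms(2,3) by simp

lemma dilation_structure_usc_on_dlim:
  assumes "dilation_structure d c Q U V W \<delta> R"
    and "S \<subseteq> closure (qball d x R)" "v \<in> S"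
  shows "usc_on S (\<lambda>u. dlim d \<delta> x u v)"
proof (rule continuous_on_imp_usc_on)
  have "(\<lambda>u. (u, v)) ` S \<subseteq> closure (qball d x R) \<times> closure (qball d x R)"
    using assms(2,3) by auto
  then show "continuous_on S (\<lambda>u. dlim d \<delta> x u v)"
    using continuous_on_compose2[OF dilation_structure_continuous_on_dlim[OF assms(1), where x = x]
        continuous_on_Pair[OF continuous_on_id continuous_on_const]]
    by simp
qed

theorem proposition1:
  fixes d :: "'a::topological_space \<Rightarrow> 'a \<Rightarrow> real"
  assumes "dilation_structure d c Q U V W \<delta> R"
    and "nondegenerate d \<delta> R"
  shows "quasimetric_on (qball d x R) (dlim d \<delta> x) c Q"
proof -
  note d = dilation_structureD(1)[OF assms(1)]
  note ineqs = tendsto_rescaled_distance_quasimetric_inequalities[where S = "closure (qball d x R)"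
      and g = "\<delta> x" and l = "dlim d \<delta> x", OF d dilation_structure_tendsto_dlim[OF assms(1)]]
  have "\<forall>u\<in>qball d x R. \<forall>v\<in>qball d x R. dlim d \<delta> x u v = 0 \<longleftrightarrow> u = v"
  proof (intro ballI iffI)
    fix u v assume "u \<in> qball d x R" "v \<in> qball d x R"
    then have "u \<in> closure (qball d x R)" "v \<in> closure (qball d x R)"
      by (auto intro: closure_subset[THEN subsetD])
    then show "dlim d \<delta> x u v = 0 \<Longrightarrow> u = v" "u = v \<Longrightarrow> dlim d \<delta> x u v = 0"
      using assms(2) ineqs(1) unfolding nondegenerate_def by auto
  qed
  moreover have "\<forall>v\<in>qball d x R. usc_on (qball d x R) (\<lambda>u. dlim d \<delta> x u v)"
    using dilation_structure_usc_on_dlim[OF assms(1) closure_subset] by blast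
  ultimately show ?thesis
    using d ineqs(2-4) closure_subset[of "qball d x R"]
    unfolding quasimetric_on_def by (simp add: subset_iff)
qed

end
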